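(* Let $\lambda$ be a nonzero real number and $n$ a positive integer. Then, for real $x$, $$(1+x)F_{n,\lambda}(x)=\sum_{k=1}^{n+1}S_{2,\lambda}(n+1,k)(k-1)!\,x^{k}+n\lambda\sum_{k=1}^{n}S_{2,\lambda}(n,k)(k-1)!\,x^{k}.$$ Moreover, $$\int_{0}^{x}\frac{F_{n+1,\lambda}(t)}{t}\,dt+n\lambda\int_{0}^{x}\frac{F_{n,\lambda}(t)}{t}\,dt=(1+x)F_{n,\lambda}(x).$$
   Context: For real $y$ and integer $k\ge0$: $(y)_{0,\lambda}=1$, $(y)_{k,\lambda}=y(y-\lambda)\cdots(y-(k-1)\lambda)$; $(y)_0=1$, $(y)_k=y(y-1)\cdots(y-k+1)$. The degenerate exponential is $e_\lambda(t)=\sum_{k\ge0}(1)_{k,\lambda}t^k/k!=(1+\lambda t)^{1/\lambda}$. The degenerate Stirling numbers of the second kind are defined by $(x)_{n,\lambda}=\sum_{k=0}^{n}S_{2,\lambda}(n,k)(x)_{k}$ ($n\ge0$). The degenerate Fubini polynomials are defined by $\frac{1}{1-x(e_\lambda(t)-1)}=\sum_{n\ge0}F_{n,\lambda}(x)\frac{t^n}{n!}$; equivalently $F_{n,\lambda}(x)=\sum_{k=0}^{n}S_{2,\lambda}(n,k)k!\,x^k$. *)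

theory Defs
  imports "HOL-Analysis.Analysis"
begin

definition deg_ff :: "real \<Rightarrow> nat \<Rightarrow> real \<Rightarrow> real" where
  "deg_ff y k lam = (\<Prod>i<k. y - real i * lam)"

definition ff :: "real \<Rightarrow> nat \<Rightarrow> real" where
  "ff y k = (\<Prod>i<k. y - real i)"

definition S2_deg :: "real \<Rightarrow> nat \<Rightarrow> nat \<Rightarrow> real" where
  "S2_deg lam n = (THE c. (\<forall>k>n. c k = 0) \<and>
      (\<forall>x::real. deg_ff x n lam = (\<Sum>k\<le>n. c k * ff x k)))"

definition fubini_deg :: "real \<Rightarrow> nat \<Rightarrow> real \<Rightarrow> real" where
  "fubini_deg lam n x = (\<Sum>k\<le>n. S2_deg lam n k * fact k * x ^ k)"

end

theory Submission
  imports Defs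
begin

text \<open>Splitting off the last factor of (x)_{n+1,\<lambda>} and writing
  (x)_k (x - n\<lambda>) = (x)_{k+1} + (k - n\<lambda>) (x)_k gives the recurrence
  S(n+1,k) = S(n,k-1) + (k - n\<lambda>) S(n,k) for S = S_{2,\<lambda>}; in particular S(n,0) = 0
  for n \<ge> 1. Multiplying the recurrence by (k-1)! x^k and summing over k yields the
  first identity. Since F_{n,\<lambda>} has no constant term, F_{n,\<lambda>}(t)/t is a polynomial
  whose antiderivative vanishing at 0 is \<Sum>_k S(n,k) (k-1)! x^k, so the second identity
  is the first one read through the fundamental theorem of calculus.\<close>

fun stirling2_deg_rec :: "real \<Rightarrow> nat \<Rightarrow> nat \<Rightarrow> real" where
  "stirling2_deg_rec lam 0 k = (if k = 0 then 1 else 0)"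
| "stirling2_deg_rec lam (Suc n) k =
     (if k = 0 then 0 else stirling2_deg_rec lam n (k - 1))
     + (real k - real n * lam) * stirling2_deg_rec lam n k"

lemma stirling2_deg_rec_eq_0: "n < k \<Longrightarrow> stirling2_deg_rec lam n k = 0"
  by (induction n arbitrary: k) auto

lemma stirling2_deg_rec_Suc_0: "stirling2_deg_rec lam (Suc n) 0 = 0"
  by (induction n) auto

lemma ff_Suc: "ff x (Suc k) = ff x k * (x - real k)"
  by (simp add: ff_def)

lemma deg_ff_Suc: "deg_ff x (Suc n) lam = deg_ff x n lam * (x - real n * lam)"
  by (simp add: deg_ff_def)

lemma deg_ff_eq_sum_stirling2_deg_rec:
  "deg_ff x n lam = (\<Sum>k\<le>n. stirling2_deg_rec lam n k * ff x k)"
proof (induction n)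
  case 0
  then show ?case by (simp add: deg_ff_def ff_def)
next
  case (Suc n)
  let ?S = "stirling2_deg_rec lam n"
  have "deg_ff x (Suc n) lam = (\<Sum>k\<le>n. ?S k * ff x k * (x - real n * lam))"
    by (simp add: deg_ff_Suc Suc sum_distrib_right)
  also have "\<dots> = (\<Sum>k\<le>n. ?S k * ff x (Suc k))
      + (\<Sum>k\<le>n. (real k - real n * lam) * ?S k * ff x k)"
    by (simp add: ff_Suc sum.distrib[symmetric] algebra_simps)
  also have "(\<Sum>k\<le>n. ?S k * ff x (Suc k))
      = (\<Sum>k\<le>Suc n. (if k = 0 then 0 else ?S (k - 1)) * ff x k)"
    by (simp only: sum.atMost_Suc_shift) simp
  also have "(\<Sum>k\<le>n. (real k - real n * lam) * ?S k * ff x k)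
      = (\<Sum>k\<le>Suc n. (real k - real n * lam) * ?S k * ff x k)"
    by (simp add: stirling2_deg_rec_eq_0)
  finally show ?case
    by (simp add: sum.distrib[symmetric] algebra_simps)
qed

lemma ff_of_nat_eq_0: "j < k \<Longrightarrow> ff (real j) k = 0"
  unfolding ff_def by (rule prod_zero) auto

lemma ff_of_nat_self_neq_0: "ff (real j) j \<noteq> 0"
  unfolding ff_def by (auto simp: prod_zero_iff)

text \<open>Evaluating at \<open>x = 0, 1, 2, \<dots>\<close> determines the coefficients one by one,
  since \<open>(j)\<^sub>k\<close> vanishes for \<open>k > j\<close> and not for \<open>k = j\<close>.\<close>

lemma ff_coeffs_unique:
  assumes "\<forall>k>n. c k = 0" and "\<forall>k>n. d k = 0"
    and eq: "\<forall>x::real. (\<Sum>k\<le>n. c k * ff x k) = (\<Sum>k\<le>n. d k * ff x k)"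
  shows "c j = d j"
proof (induction j rule: less_induct)
  case (less j)
  show ?case
  proof (cases "j \<le> n")
    case False
    then show ?thesis using assms(1,2) by auto
  next
    case True
    have "0 = (\<Sum>k\<le>n. (c k - d k) * ff (real j) k)"
      using eq by (simp add: left_diff_distrib sum_subtractf)
    also have "\<dots> = (\<Sum>k\<in>{j}. (c k - d k) * ff (real j) k)"
    proof (rule sum.mono_neutral_right)
      show "\<forall>i\<in>{..n} - {j}. (c i - d i) * ff (real j) i = 0"
        using less ff_of_nat_eq_0
        by (metis DiffE insertI1 linorder_neqE_nat mult_eq_0_iff right_minus_eq)
    qed (use True in auto)
    finally show ?thesis using ff_of_nat_self_neq_0[of j] by simp
  qed
qed

lemma S2_deg_eq_rec: "S2_deg lam n = stirling2_deg_rec lam n"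
  unfolding S2_deg_def
proof (rule the_equality)
  fix c
  assume c: "(\<forall>k>n. c k = 0) \<and> (\<forall>x. deg_ff x n lam = (\<Sum>k\<le>n. c k * ff x k))"
  show "c = stirling2_deg_rec lam n"
  proof
    fix j
    show "c j = stirling2_deg_rec lam n j"
      by (rule ff_coeffs_unique[of n])
        (use c stirling2_deg_rec_eq_0 deg_ff_eq_sum_stirling2_deg_rec in auto)
  qed
qed (use stirling2_deg_rec_eq_0 deg_ff_eq_sum_stirling2_deg_rec in auto)

lemma S2_deg_eq_0: "n < k \<Longrightarrow> S2_deg lam n k = 0"
  by (simp add: S2_deg_eq_rec stirling2_deg_rec_eq_0)

lemma S2_deg_right_0: "1 \<le> n \<Longrightarrow> S2_deg lam n 0 = 0"
  using stirling2_deg_rec_Suc_0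
  by (cases n) (auto simp: S2_deg_eq_rec simp del: stirling2_deg_rec.simps)

lemma S2_deg_Suc:
  "S2_deg lam (Suc n) k =
     (if k = 0 then 0 else S2_deg lam n (k - 1)) + (real k - real n * lam) * S2_deg lam n k"
  by (simp add: S2_deg_eq_rec)

lemma fubini_deg_eq_sum_from_1:
  "1 \<le> n \<Longrightarrow> fubini_deg lam n x = (\<Sum>k=1..n. S2_deg lam n k * fact k * x ^ k)"
  by (simp add: fubini_deg_def atMost_atLeast0 sum.atLeast_Suc_atMost S2_deg_right_0)

definition fubini_deg_antideriv :: "real \<Rightarrow> nat \<Rightarrow> real \<Rightarrow> real" where
  "fubini_deg_antideriv lam n x = (\<Sum>k=1..n. S2_deg lam n k * fact (k - 1) * x ^ k)"

lemma fubini_deg_antideriv_Suc: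
  assumes "1 \<le> n"
  shows "fubini_deg_antideriv lam (Suc n) x
           = (1 + x) * fubini_deg lam n x - real n * lam * fubini_deg_antideriv lam n x"
proof -
  let ?S = "S2_deg lam n"
  have "fubini_deg_antideriv lam (Suc n) x
      = (\<Sum>k=1..Suc n. ?S (k - 1) * fact (k - 1) * x ^ k)
        + (\<Sum>k=1..Suc n. (real k - real n * lam) * ?S k * fact (k - 1) * x ^ k)"
    by (simp add: fubini_deg_antideriv_def S2_deg_Suc sum.distrib[symmetric] algebra_simps)
  also have "(\<Sum>k=1..Suc n. ?S (k - 1) * fact (k - 1) * x ^ k)
      = (\<Sum>k=0..n. ?S k * fact k * x ^ Suc k)"
    using sum.shift_bounds_cl_Suc_ivl[of "\<lambda>k. ?S (k - 1) * fact (k - 1) * x ^ k" 0 n]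
    by simp
  also have "\<dots> = x * fubini_deg lam n x"
    by (simp add: fubini_deg_def atMost_atLeast0 sum_distrib_left algebra_simps)
  also have "(\<Sum>k=1..Suc n. (real k - real n * lam) * ?S k * fact (k - 1) * x ^ k)
      = (\<Sum>k=1..n. (real k - real n * lam) * ?S k * fact (k - 1) * x ^ k)"
    by (simp add: S2_deg_eq_0)
  also have "\<dots> = (\<Sum>k=1..n. ?S k * fact k * x ^ k - real n * lam * (?S k * fact (k - 1) * x ^ k))"
  proof (rule sum.cong)
    fix k
    assume "k \<in> {1..n}"
    then show "(real k - real n * lam) * ?S k * fact (k - 1) * x ^ k
        = ?S k * fact k * x ^ k - real n * lam * (?S k * fact (k - 1) * x ^ k)"
      by (simp add: fact_reduce[of k] algebra_simps)
  qed simp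
  also have "\<dots> = fubini_deg lam n x - real n * lam * fubini_deg_antideriv lam n x"
    using assms by (simp add: fubini_deg_eq_sum_from_1 fubini_deg_antideriv_def
        sum_subtractf sum_distrib_left)
  finally show ?thesis by (simp add: algebra_simps)
qed

lemma interval_integral_poly_div_self:
  fixes a :: "nat \<Rightarrow> real"
  assumes "a 0 = 0"
  shows "(LBINT t=ereal 0..ereal x. (\<Sum>k\<le>n. a k * t ^ k) / t)
           = (\<Sum>k=1..n. a k / real k * x ^ k)"
proof -
  define q where "q t = (\<Sum>k=1..n. a k * t ^ (k - 1))" for t :: real
  have "(\<Sum>k\<le>n. a k * t ^ k) = t * q t" for t
    unfolding q_def sum_distrib_left
    by (simp add: atMost_atLeast0 sum.atLeast_Suc_atMost assms power_eq_if mult_ac)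
  then have "(LBINT t=ereal 0..ereal x. (\<Sum>k\<le>n. a k * t ^ k) / t)
      = (LBINT t=ereal 0..ereal x. q t)"
    by (intro interval_integral_cong) (auto simp: einterval_def min_def max_def split: if_splits)
  also have "\<dots> = (\<Sum>k=1..n. a k / real k * x ^ k) - (\<Sum>k=1..n. a k / real k * 0 ^ k)"
  proof (rule interval_integral_FTC_finite)
    show "continuous_on {min 0 x..max 0 x} q"
      unfolding q_def by (intro continuous_intros)
  next
    fix t :: real
    have "((\<lambda>t. \<Sum>k=1..n. a k / real k * t ^ k) has_real_derivative q t) (at t)"
      unfolding q_def by (auto intro!: derivative_eq_intros sum.cong)
    then show "((\<lambda>t. \<Sum>k=1..n. a k / real k * t ^ k) has_vector_derivative q t)
        (at t within {min 0 x..max 0 x})"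
      by (simp add: has_real_derivative_iff_has_vector_derivative has_vector_derivative_at_within)
  qed
  finally show ?thesis by simp
qed

lemma interval_integral_fubini_deg_div:
  assumes "1 \<le> n"
  shows "(LBINT t=ereal 0..ereal x. fubini_deg lam n t / t) = fubini_deg_antideriv lam n x"
proof -
  have "(LBINT t=ereal 0..ereal x. fubini_deg lam n t / t)
      = (\<Sum>k=1..n. S2_deg lam n k * fact k / real k * x ^ k)"
    unfolding fubini_deg_def
    by (rule interval_integral_poly_div_self) (use assms S2_deg_right_0 in simp)
  also have "\<dots> = fubini_deg_antideriv lam n x"
    unfolding fubini_deg_antideriv_def by (intro sum.cong) (auto simp: fact_reduce)
  finally show ?thesis .
qed

theorem theorem13:
  fixes lam x :: real and n :: nat
  assumes "lam \<noteq> 0" and "n \<ge> 1"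
  shows "(1 + x) * fubini_deg lam n x =
           (\<Sum>k=1..n+1. S2_deg lam (n+1) k * fact (k - 1) * x ^ k)
           + real n * lam * (\<Sum>k=1..n. S2_deg lam n k * fact (k - 1) * x ^ k)
         \<and> (LBINT t=ereal 0..ereal x. fubini_deg lam (n+1) t / t)
           + real n * lam * (LBINT t=ereal 0..ereal x. fubini_deg lam n t / t)
         = (1 + x) * fubini_deg lam n x"
proof -
  have "(1 + x) * fubini_deg lam n x
      = fubini_deg_antideriv lam (n + 1) x + real n * lam * fubini_deg_antideriv lam n x"
    using fubini_deg_antideriv_Suc[OF assms(2)] by simp
  moreover have "1 \<le> n + 1" by simp
  ultimately show ?thesis
    using interval_integral_fubini_deg_div assms(2)
    by (simp add: fubini_deg_antideriv_def)
qed

end
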